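(* Fix a diffusion step $i$ with noise levels $\alpha^{x}_i,\alpha^{k}_i\in(0,1)$ and a noisy joint point $y_i=[x_i;k_i]\in\mathbb{R}^{n_x}\times\mathbb{R}^{n_k}$. Let $q(\cdot\mid y_i)$ be the product proposal on clean joint samples $$q(y_0\mid y_i)=p^{x}_{0|i}(x_0\mid x_i)\,q^{k}(k_0\mid k_i),\qquad q^{k}(k_0\mid k_i)=\mathcal N\!\Big(k_0;\ (\alpha^{k}_i)^{-1/2}k_i,\ \big(\tfrac{1}{\alpha^{k}_i}-1\big)I\Big).$$ Assume $0<\mathbb{E}_{\hat y_0\sim q(\cdot\mid y_i)}[V(\hat x_0,\hat k_0)\,p^{k}_0(\hat k_0)]<\infty$, and that all integrals below are finite and differentiation under the integral sign with respect to $y_i$ is permitted. Then the score of the noisy joint marginal satisfies $$\nabla_{y_i}\log p_i(y_i)=\frac{\mathbb{E}_{\hat y_0\sim q(\cdot\mid y_i)}\big[s_{\alpha^{y}_i}(\hat y_0\mid y_i)\,V(\hat x_0,\hat k_0)\,p^{k}_0(\hat k_0)\big]}{\mathbb{E}_{\hat y_0\sim q(\cdot\mid y_i)}\big[V(\hat x_0,\hat k_0)\,p^{k}_0(\hat k_0)\big]},$$ where $\hat y_0=[\hat x_0;\hat k_0]$.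
   Context: Let $p^{x}_0$ be a probability density on $\mathbb{R}^{n_x}$ (the model-free/diffusion data distribution), $p^{k}_0$ a probability density on $\mathbb{R}^{n_k}$ (the model-based prior), and $V:\mathbb{R}^{n_x}\times\mathbb{R}^{n_k}\to\mathbb{R}_{\ge 0}$ a measurable "interaction potential" such that $Z=\int p^{x}_0(x)p^{k}_0(k)V(x,k)\,dx\,dk\in(0,\infty)$. The clean joint density is $p_0(y_0)=Z^{-1}p^{x}_0(x_0)p^{k}_0(k_0)V(x_0,k_0)$ for $y_0=[x_0;k_0]$. For noise levels $\alpha^{x}_i,\alpha^{k}_i\in(0,1)$ write $\alpha^{y}_i=[\alpha^{x}_i;\alpha^{k}_i]$ and define the joint forward kernel as the product Gaussian $$p_{\alpha^{y}_i}(y_i\mid y_0)=\mathcal N\big(x_i;\sqrt{\alpha^{x}_i}x_0,(1-\alpha^{x}_i)I\big)\,\mathcal N\big(k_i;\sqrt{\alpha^{k}_i}k_0,(1-\alpha^{k}_i)I\big),$$ with the $x$-factor denoted $p^{x}_{\alpha^{x}_i}(x_i\mid x_0)$. The noisy joint marginal is $p_i(y_i)=\int p_{\alpha^{y}_i}(y_i\mid y_0)p_0(y_0)\,dy_0$. The model-free noisy marginal is $p^{x}_i(x_i)=\int p^{x}_{\alpha^{x}_i}(x_i\mid x_0)p^{x}_0(x_0)\,dx_0$ and the model-free denoising posterior is $p^{x}_{0|i}(x_0\mid x_i)=p^{x}_{\alpha^{x}_i}(x_i\mid x_0)p^{x}_0(x_0)/p^{x}_i(x_i)$. The (Tweedie)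 score of the forward kernel is $s_{\alpha^{y}_i}(y_0\mid y_i)=\nabla_{y_i}\log p_{\alpha^{y}_i}(y_i\mid y_0)$, i.e. the vector with $x$-block $-\frac{x_i-\sqrt{\alpha^{x}_i}x_0}{1-\alpha^{x}_i}$ and $k$-block $-\frac{k_i-\sqrt{\alpha^{k}_i}k_0}{1-\alpha^{k}_i}$. *)

theory Defs
  imports "HOL-Analysis.Analysis"
begin

definition mvn_density :: "'a::euclidean_space \<Rightarrow> real \<Rightarrow> 'a \<Rightarrow> real" where
  "mvn_density m v z = (2 * pi * v) powr (- real DIM('a) / 2) * exp (- (norm (z - m))\<^sup>2 / (2 * v))"

definition fwd_x :: "real \<Rightarrow> 'a::euclidean_space \<Rightarrow> 'a \<Rightarrow> real" where
  "fwd_x a xi x0 = mvn_density (sqrt a *\<^sub>R x0) (1 - a) xi"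

definition fwd_y :: "real \<Rightarrow> real \<Rightarrow> ('a::euclidean_space \<times> 'b::euclidean_space) \<Rightarrow> ('a \<times> 'b) \<Rightarrow> real" where
  "fwd_y ax ak yi y0 = fwd_x ax (fst yi) (fst y0) * fwd_x ak (snd yi) (snd y0)"

definition Zc :: "('a::euclidean_space \<Rightarrow> real) \<Rightarrow> ('b::euclidean_space \<Rightarrow> real) \<Rightarrow> ('a \<Rightarrow> 'b \<Rightarrow> real) \<Rightarrow> real" where
  "Zc px pk V = (LINT y|lborel. px (fst y) * pk (snd y) * V (fst y) (snd y))"

definition p0_joint :: "('a::euclidean_space \<Rightarrow> real) \<Rightarrow> ('b::euclidean_space \<Rightarrow> real) \<Rightarrow> ('a \<Rightarrow> 'b \<Rightarrow> real) \<Rightarrow> 'a \<times> 'b \<Rightarrow> real" where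
  "p0_joint px pk V y0 = px (fst y0) * pk (snd y0) * V (fst y0) (snd y0) / Zc px pk V"

definition pi_joint :: "real \<Rightarrow> real \<Rightarrow> ('a::euclidean_space \<Rightarrow> real) \<Rightarrow> ('b::euclidean_space \<Rightarrow> real) \<Rightarrow> ('a \<Rightarrow> 'b \<Rightarrow> real) \<Rightarrow> 'a \<times> 'b \<Rightarrow> real" where
  "pi_joint ax ak px pk V yi = (LINT y0|lborel. fwd_y ax ak yi y0 * p0_joint px pk V y0)"

definition pi_x :: "real \<Rightarrow> ('a::euclidean_space \<Rightarrow> real) \<Rightarrow> 'a \<Rightarrow> real" where
  "pi_x ax px xi = (LINT x0|lborel. fwd_x ax xi x0 * px x0)"

definition post_x :: "real \<Rightarrow> ('a::euclidean_space \<Rightarrow> real) \<Rightarrow> 'a \<Rightarrow> 'a \<Rightarrow> real" where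
  "post_x ax px xi x0 = fwd_x ax xi x0 * px x0 / pi_x ax px xi"

definition q_k :: "real \<Rightarrow> 'b::euclidean_space \<Rightarrow> 'b \<Rightarrow> real" where
  "q_k ak ki k0 = mvn_density ((1 / sqrt ak) *\<^sub>R ki) (1 / ak - 1) k0"

definition q_prop :: "real \<Rightarrow> real \<Rightarrow> ('a::euclidean_space \<Rightarrow> real) \<Rightarrow> 'a \<times> 'b::euclidean_space \<Rightarrow> 'a \<times> 'b \<Rightarrow> real" where
  "q_prop ax ak px yi y0 = post_x ax px (fst yi) (fst y0) * q_k ak (snd yi) (snd y0)"

definition tweedie_score :: "real \<Rightarrow> real \<Rightarrow> 'a::euclidean_space \<times> 'b::euclidean_space \<Rightarrow> 'a \<times> 'b \<Rightarrow> 'a \<times> 'b" where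
  "tweedie_score ax ak y0 yi =
     (- ((1 / (1 - ax)) *\<^sub>R (fst yi - sqrt ax *\<^sub>R fst y0)),
      - ((1 / (1 - ak)) *\<^sub>R (snd yi - sqrt ak *\<^sub>R snd y0)))"

end

theory Submission imports Defs begin

text \<open>
  Viewed as a function of k0, the forward kernel N(ki; sqrt(a) k0, (1 - a) I) equals
  a^(-n_k/2) q_k(k0 | ki), and p_x(xi | x0) p_x0(x0) = p_xi(xi) p_x0|i(x0 | xi). Hence the
  integrand of p_i(yi) is K q(y0 | yi) V(x0, k0) p_k0(k0) with a constant
  K = p_xi(xi) a^(-n_k/2) / Z > 0 not depending on y0. The gradient of the Gaussian kernel
  is the kernel times the Tweedie score, so differentiating under the integral gives
  grad p_i = K E_q[s V p_k0] while p_i = K E_q[V p_k0]; in grad log p_i = grad p_i / p_i the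
  constant K cancels.
\<close>

lemma mvn_density_nonneg:
  assumes "v > 0"
  shows "mvn_density m v z \<ge> 0"
  using assms by (simp add: mvn_density_def)

lemma mvn_density_has_derivative:
  fixes m z :: "'a::euclidean_space"
  assumes "v \<noteq> 0"
  shows "(mvn_density m v has_derivative
           (\<lambda>h. mvn_density m v z * ((- (1 / v) *\<^sub>R (z - m)) \<bullet> h))) (at z)"
  unfolding mvn_density_def power2_norm_eq_inner
  using assms
  by (auto intro!: derivative_eq_intros simp: fun_eq_iff inner_commute inner_diff_right field_simps)

lemma fwd_x_eq_q_k:
  fixes ki k0 :: "'b::euclidean_space"
  assumes "0 < a" "a < 1"
  shows "fwd_x a ki k0 = a powr (- real DIM('b) / 2) * q_k a ki k0"
proof -
  have "ki - sqrt a *\<^sub>R k0 = (- sqrt a) *\<^sub>R (k0 - (1 / sqrt a) *\<^sub>R ki)"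
    using assms by (simp add: algebra_simps)
  then have norm_eq: "(norm (ki - sqrt a *\<^sub>R k0))\<^sup>2 = a * (norm (k0 - (1 / sqrt a) *\<^sub>R ki))\<^sup>2"
    using assms by (simp add: power_mult_distrib)
  have exponent_eq: "- (norm (ki - sqrt a *\<^sub>R k0))\<^sup>2 / (2 * (1 - a))
      = - (norm (k0 - (1 / sqrt a) *\<^sub>R ki))\<^sup>2 / (2 * (1 / a - 1))"
    unfolding norm_eq using assms by (simp add: field_simps)
  have "2 * pi * (1 - a) = a * (2 * pi * (1 / a - 1))"
    using assms by (simp add: field_simps)
  then have factor_eq: "(2 * pi * (1 - a)) powr (- real DIM('b) / 2)
      = a powr (- real DIM('b) / 2) * (2 * pi * (1 / a - 1)) powr (- real DIM('b) / 2)"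
    using assms by (simp add: powr_mult)
  show ?thesis
    unfolding fwd_x_def q_k_def mvn_density_def exponent_eq factor_eq by simp
qed

lemma fwd_y_has_derivative:
  fixes yi y0 :: "'a::euclidean_space \<times> 'b::euclidean_space"
  assumes "ax < 1" "ak < 1"
  shows "((\<lambda>y. fwd_y ax ak y y0) has_derivative
           (\<lambda>h. fwd_y ax ak yi y0 * (tweedie_score ax ak y0 yi \<bullet> h))) (at yi)"
proof -
  have dx: "((\<lambda>y. fwd_x ax (fst y) (fst y0)) has_derivative
      (\<lambda>h. fwd_x ax (fst yi) (fst y0)
             * ((- (1 / (1 - ax)) *\<^sub>R (fst yi - sqrt ax *\<^sub>R fst y0)) \<bullet> fst h))) (at yi)"
    unfolding fwd_x_def using assms
    by (intro has_derivative_compose[OF has_derivative_fst[OF has_derivative_ident]]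
        mvn_density_has_derivative) simp
  have dk: "((\<lambda>y. fwd_x ak (snd y) (snd y0)) has_derivative
      (\<lambda>h. fwd_x ak (snd yi) (snd y0)
             * ((- (1 / (1 - ak)) *\<^sub>R (snd yi - sqrt ak *\<^sub>R snd y0)) \<bullet> snd h))) (at yi)"
    unfolding fwd_x_def using assms
    by (intro has_derivative_compose[OF has_derivative_snd[OF has_derivative_ident]]
        mvn_density_has_derivative) simp
  show ?thesis
    unfolding fwd_y_def
    by (rule has_derivative_eq_rhs[OF has_derivative_mult[OF dx dk]])
      (simp add: fun_eq_iff tweedie_score_def inner_prod_def algebra_simps)
qed

lemma pi_x_nonneg:
  assumes "a < 1" "\<And>x. px x \<ge> 0"
  shows "pi_x a px xi \<ge> 0"
  unfolding pi_x_def fwd_x_def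
  using assms by (intro integral_nonneg_AE AE_I2 mult_nonneg_nonneg mvn_density_nonneg) auto

text \<open>Since \<open>post_x\<close> divides by \<open>pi_x\<close>, the proposal vanishes identically when \<open>pi_x = 0\<close>.\<close>
lemma pi_x_pos_if_integral_q_prop_pos:
  assumes "a < 1" "\<And>x. px x \<ge> 0"
    and "(LINT y0|M. q_prop a ak px yi y0 * w y0) > 0"
  shows "pi_x a px (fst yi) > 0"
proof -
  have "pi_x a px (fst yi) \<noteq> 0"
  proof
    assume "pi_x a px (fst yi) = 0"
    then have "q_prop a ak px yi = (\<lambda>_. 0)"
      by (simp add: fun_eq_iff q_prop_def post_x_def)
    with assms(3) show False by simp
  qed
  with pi_x_nonneg[of a px, OF assms(1,2)] show ?thesis
    by (simp add: order_less_le)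
qed

lemma fwd_y_mult_p0_joint_eq_q_prop:
  fixes yi y0 :: "'a::euclidean_space \<times> 'b::euclidean_space"
  assumes "0 < ak" "ak < 1" "pi_x ax px (fst yi) \<noteq> 0" "Zc px pk V \<noteq> 0"
  shows "fwd_y ax ak yi y0 * p0_joint px pk V y0
       = (pi_x ax px (fst yi) * ak powr (- real DIM('b) / 2) / Zc px pk V)
         * (q_prop ax ak px yi y0 * (V (fst y0) (snd y0) * pk (snd y0)))"
  using assms
  by (simp add: fwd_y_def p0_joint_def q_prop_def post_x_def fwd_x_eq_q_k field_simps)

lemma GDERIV_ln_integral_proportional:
  fixes f :: "'a::euclidean_space \<Rightarrow> real" and g :: "'a \<Rightarrow> 'b \<Rightarrow> real"
    and Q :: "'b \<Rightarrow> real" and S :: "'b \<Rightarrow> 'a"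
  assumes f_deriv: "(f has_derivative
        (\<lambda>h. LINT y0|M. frechet_derivative (\<lambda>y. g y y0) (at x) h)) (at x)"
    and g_deriv: "\<And>y0. ((\<lambda>y. g y y0) has_derivative (\<lambda>h. g x y0 * (S y0 \<bullet> h))) (at x)"
    and g_eq: "\<And>y0. g x y0 = K * Q y0"
    and f_eq: "f x = (LINT y0|M. g x y0)"
    and K_pos: "K > 0" and Q_pos: "(LINT y0|M. Q y0) > 0"
    and QS_int: "integrable M (\<lambda>y0. Q y0 *\<^sub>R S y0)"
  shows "GDERIV (\<lambda>y. ln (f y)) x :> inverse (LINT y0|M. Q y0) *\<^sub>R (LINT y0|M. Q y0 *\<^sub>R S y0)"
proof -
  let ?N = "LINT y0|M. Q y0 *\<^sub>R S y0"
  have "(LINT y0|M. frechet_derivative (\<lambda>y. g y y0) (at x) h) = h \<bullet> (K *\<^sub>R ?N)" for h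
  proof -
    have "(LINT y0|M. frechet_derivative (\<lambda>y. g y y0) (at x) h)
        = (LINT y0|M. K * ((Q y0 *\<^sub>R S y0) \<bullet> h))"
      by (simp add: frechet_derivative_at[OF g_deriv, symmetric] g_eq mult.assoc)
    also have "\<dots> = K * (?N \<bullet> h)"
      using integral_inner_left[OF QS_int, of h] by (simp del: integral_inner_left)
    finally show ?thesis by (simp add: inner_commute)
  qed
  then have "GDERIV f x :> K *\<^sub>R ?N"
    using f_deriv by (simp add: gderiv_def)
  moreover have f_x: "f x = K * (LINT y0|M. Q y0)"
    by (simp add: f_eq g_eq)
  ultimately have "GDERIV (\<lambda>y. ln (f y)) x :> inverse (f x) *\<^sub>R (K *\<^sub>R ?N)"
    by (intro GDERIV_DERIV_compose[OF _ DERIV_ln]) (simp_all add: K_pos Q_pos)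
  moreover have "inverse (f x) *\<^sub>R (K *\<^sub>R ?N) = inverse (LINT y0|M. Q y0) *\<^sub>R ?N"
    using K_pos by (simp add: f_x)
  ultimately show ?thesis
    by (rule GDERIV_subst)
qed

theorem theorem1:
  fixes px :: "real ^ 'nx \<Rightarrow> real" and pk :: "real ^ 'nk \<Rightarrow> real"
    and V :: "real ^ 'nx \<Rightarrow> real ^ 'nk \<Rightarrow> real"
    and ax ak :: real and yi :: "(real ^ 'nx) \<times> (real ^ 'nk)"
  assumes px_meas: "px \<in> borel_measurable lborel"
    and px_nonneg: "\<And>x. px x \<ge> 0"
    and px_int: "integrable lborel px" and px_one: "(LINT x|lborel. px x) = 1"
    and pk_meas: "pk \<in> borel_measurable lborel"
    and pk_nonneg: "\<And>k. pk k \<ge> 0"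
    and pk_int: "integrable lborel pk" and pk_one: "(LINT k|lborel. pk k) = 1"
    and V_meas: "(\<lambda>y. V (fst y) (snd y)) \<in> borel_measurable lborel"
    and V_nonneg: "\<And>x k. V x k \<ge> 0"
    and Z_int: "integrable lborel (\<lambda>y. px (fst y) * pk (snd y) * V (fst y) (snd y))"
    and Z_pos: "Zc px pk V > 0"
    and ax_range: "0 < ax" "ax < 1"
    and ak_range: "0 < ak" "ak < 1"
    and den_int: "integrable lborel (\<lambda>y0. q_prop ax ak px yi y0 * (V (fst y0) (snd y0) * pk (snd y0)))"
    and den_pos: "(LINT y0|lborel. q_prop ax ak px yi y0 * (V (fst y0) (snd y0) * pk (snd y0))) > 0"
    and num_int: "integrable lborel (\<lambda>y0. (q_prop ax ak px yi y0 * (V (fst y0) (snd y0) * pk (snd y0)))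
                        *\<^sub>R tweedie_score ax ak y0 yi)"
    and pi_int: "integrable lborel (\<lambda>y0. fwd_y ax ak yi y0 * p0_joint px pk V y0)"
    and diff_int: "\<And>h. integrable lborel
          (\<lambda>y0. frechet_derivative (\<lambda>y. fwd_y ax ak y y0 * p0_joint px pk V y0) (at yi) h)"
    and diff_under_int: "(pi_joint ax ak px pk V has_derivative
          (\<lambda>h. LINT y0|lborel. frechet_derivative (\<lambda>y. fwd_y ax ak y y0 * p0_joint px pk V y0) (at yi) h))
          (at yi)"
  shows "GDERIV (\<lambda>y. ln (pi_joint ax ak px pk V y)) yi :>
    (inverse (LINT y0|lborel. q_prop ax ak px yi y0 * (V (fst y0) (snd y0) * pk (snd y0))))
      *\<^sub>R (LINT y0|lborel. (q_prop ax ak px yi y0 * (V (fst y0) (snd y0) * pk (snd y0)))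
                        *\<^sub>R tweedie_score ax ak y0 yi)"
proof -
  define K where "K = pi_x ax px (fst yi) * ak powr (- real DIM(real ^ 'nk) / 2) / Zc px pk V"
  have "pi_x ax px (fst yi) > 0"
    using ax_range(2) px_nonneg den_pos by (rule pi_x_pos_if_integral_q_prop_pos)
  then have K_pos: "K > 0"
    unfolding K_def using ak_range Z_pos by (intro divide_pos_pos mult_pos_pos) auto
  show ?thesis
  proof (rule GDERIV_ln_integral_proportional[OF diff_under_int _ _ _ K_pos den_pos num_int])
    show "((\<lambda>y. fwd_y ax ak y y0 * p0_joint px pk V y0) has_derivative
        (\<lambda>h. fwd_y ax ak yi y0 * p0_joint px pk V y0 * (tweedie_score ax ak y0 yi \<bullet> h))) (at yi)"
      for y0
      using has_derivative_mult_left[OF fwd_y_has_derivative[OF ax_range(2) ak_range(2), of y0 yi],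
          of "p0_joint px pk V y0"]
      by (simp add: ac_simps)
    show "fwd_y ax ak yi y0 * p0_joint px pk V y0
        = K * (q_prop ax ak px yi y0 * (V (fst y0) (snd y0) * pk (snd y0)))" for y0
      unfolding K_def using ak_range \<open>pi_x ax px (fst yi) > 0\<close> Z_pos
      by (intro fwd_y_mult_p0_joint_eq_q_prop) auto
  qed (simp add: pi_joint_def)
qed

end
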